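(* Let $\mathcal{L}$ be a family of linear algebraic laws involving a single binary operation symbol. Then $\mathcal{G}(\mathcal{L})$ does not contain the empty operator, every element of $\mathcal{G}(\mathcal{L})$ admits a seed, and every seed of an element of $\mathcal{G}(\mathcal{L})$ is a pair of injective terms.
   Context: Terms are built from an infinite set of variables with one binary operation symbol $*$; addresses are finite sequences over $\{0,1\}$ ($0$ = left, $1$ = right), $t/\alpha$ is the subterm at $\alpha$. A term is injective if no variable occurs twice in it. A law $l=r$ is linear if it is balanced (same variables on both sides) and $l$, $r$ are injective. For an oriented law $L=(l,r)$ and address $\alpha$, $O^{+}_{L,\alpha}$ is the partial map sending $t$ with $t/\alpha=l\sigma$ (for a substitution $\sigma$) to the term obtained by replacing that subterm by $r\sigma$, and $O^{-}_{L,\alpha}$ is its inverse; $\mathcal{G}(\mathcal{L})$ is the monoid of partial maps generated by these under composition. A pair of terms $(l,r)$ is a seed of a partial operator $f$ if $f$, as a set of pairs, is exactly the set of all pairs $(l\sigma,r\sigma)$ with $\sigma$ a substitution. *)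

theory Defs
  imports Main
begin

datatype 'v trm = Var 'v | Op "'v trm" "'v trm"

text \<open>Addresses: finite sequences over {0,1}; False = 0 = left, True = 1 = right.\<close>
type_synonym addr = "bool list"

fun subterm :: "'v trm \<Rightarrow> addr \<Rightarrow> 'v trm option" where
  "subterm t [] = Some t"
| "subterm (Var x) (d # \<alpha>) = None"
| "subterm (Op t1 t2) (d # \<alpha>) = (if d then subterm t2 \<alpha> else subterm t1 \<alpha>)"

fun replace :: "'v trm \<Rightarrow> addr \<Rightarrow> 'v trm \<Rightarrow> 'v trm option" where
  "replace t [] s = Some s"
| "replace (Var x) (d # \<alpha>) s = None"
| "replace (Op t1 t2) (d # \<alpha>) s =
     (if d then map_option (\<lambda>u. Op t1 u) (replace t2 \<alpha> s)
      else map_option (\<lambda>u. Op u t2) (replace t1 \<alpha> s))"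

fun subst :: "('v \<Rightarrow> 'v trm) \<Rightarrow> 'v trm \<Rightarrow> 'v trm" where
  "subst \<sigma> (Var x) = \<sigma> x"
| "subst \<sigma> (Op t1 t2) = Op (subst \<sigma> t1) (subst \<sigma> t2)"

fun var_occs :: "'v trm \<Rightarrow> 'v list" where
  "var_occs (Var x) = [x]"
| "var_occs (Op t1 t2) = var_occs t1 @ var_occs t2"

definition injective_term :: "'v trm \<Rightarrow> bool" where
  "injective_term t \<longleftrightarrow> distinct (var_occs t)"

definition linear_law :: "'v trm \<times> 'v trm \<Rightarrow> bool" where
  "linear_law L \<longleftrightarrow> set (var_occs (fst L)) = set (var_occs (snd L))
     \<and> injective_term (fst L) \<and> injective_term (snd L)"

text \<open>Partial operators are represented as sets of pairs (functional relations).\<close>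
type_synonym 'v op = "('v trm \<times> 'v trm) set"

definition O_plus :: "'v trm \<times> 'v trm \<Rightarrow> addr \<Rightarrow> 'v op" where
  "O_plus L \<alpha> = {(t, t'). \<exists>\<sigma>. subterm t \<alpha> = Some (subst \<sigma> (fst L))
                              \<and> replace t \<alpha> (subst \<sigma> (snd L)) = Some t'}"

definition O_minus :: "'v trm \<times> 'v trm \<Rightarrow> addr \<Rightarrow> 'v op" where
  "O_minus L \<alpha> = converse (O_plus L \<alpha>)"

definition generators :: "('v trm \<times> 'v trm) set \<Rightarrow> 'v op set" where
  "generators Ls = {O_plus L \<alpha> | L \<alpha>. L \<in> Ls} \<union> {O_minus L \<alpha> | L \<alpha>. L \<in> Ls}"

inductive_set G_mon :: "('v trm \<times> 'v trm) set \<Rightarrow> 'v op set" for Ls where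
  G_id: "Id \<in> G_mon Ls"
| G_step: "f \<in> G_mon Ls \<Longrightarrow> g \<in> generators Ls \<Longrightarrow> f O g \<in> G_mon Ls"

definition seed :: "'v op \<Rightarrow> 'v trm \<times> 'v trm \<Rightarrow> bool" where
  "seed f p \<longleftrightarrow> f = {(subst \<sigma> (fst p), subst \<sigma> (snd p)) | \<sigma>. True}"

end

theory Submission
  imports Defs
begin

text \<open>Every operator of \<open>\<G>(\<L>)\<close> is the set of all instances of a linear pair. For the
  identity take \<open>(x, x)\<close>; for \<open>O\<^sup>+\<^sub>L\<^sub>,\<^sub>\<alpha>\<close> extend \<open>L\<close> by a fresh variable at each step
  of \<open>\<alpha>\<close>; \<open>O\<^sup>-\<close> swaps the pair. For a composition, rename the second pair apart and unify
  the right side of the first with the left side of the second: variable-disjoint injective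
  terms have a most general unifier whose common instance is again injective, and balancedness
  carries the unifier over to the outer sides. Finally, two seeds of one operator are instances
  of each other, and a term with an injective instance is itself injective.\<close>

abbreviation vars :: "'v trm \<Rightarrow> 'v set" where
  "vars t \<equiv> set (var_occs t)"

lemma var_occs_not_Nil: "var_occs t \<noteq> []"
  by (induction t) auto

lemma var_occs_subst: "var_occs (subst \<theta> t) = concat (map (\<lambda>x. var_occs (\<theta> x)) (var_occs t))"
  by (induction t) auto

lemma vars_subst: "vars (subst \<theta> t) = (\<Union>x\<in>vars t. vars (\<theta> x))"
  by (induction t) auto

lemma subst_cong: "(\<And>x. x \<in> vars t \<Longrightarrow> \<sigma> x = \<tau> x) \<Longrightarrow> subst \<sigma> t = subst \<tau> t"
  by (induction t) auto

lemma subst_subst: "subst \<tau> (subst \<sigma> t) = subst (\<lambda>x. subst \<tau> (\<sigma> x)) t"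
  by (induction t) auto

lemma subst_Var [simp]: "subst Var t = t"
  by (induction t) auto

lemma distinct_concat_map_iff:
  assumes "\<And>x. g x \<noteq> []"
  shows "distinct (concat (map g xs)) \<longleftrightarrow> distinct xs \<and> (\<forall>x\<in>set xs. distinct (g x))
           \<and> pairwise (\<lambda>x y. disjnt (set (g x)) (set (g y))) (set xs)"
proof (induction xs)
  case (Cons x xs)
  have "x \<notin> set xs" if "\<forall>y\<in>set xs. disjnt (set (g x)) (set (g y))"
    using that assms[of x] by (auto simp: disjnt_def)
  then have "distinct (concat (map g (x # xs))) \<longleftrightarrow> distinct (g x) \<and> distinct (concat (map g xs))
          \<and> x \<notin> set xs \<and> (\<forall>y\<in>set xs. disjnt (set (g x)) (set (g y)))"
    by (auto simp: disjnt_def)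
  then show ?case
    unfolding Cons.IH by (auto simp: pairwise_insert disjnt_sym)
qed simp

definition linear_subst :: "('v \<Rightarrow> 'v trm) \<Rightarrow> 'v set \<Rightarrow> bool" where
  "linear_subst \<theta> V \<longleftrightarrow> (\<forall>x\<in>V. injective_term (\<theta> x))
     \<and> pairwise (\<lambda>x y. disjnt (vars (\<theta> x)) (vars (\<theta> y))) V"

lemma injective_term_subst_iff:
  "injective_term (subst \<theta> t) \<longleftrightarrow> injective_term t \<and> linear_subst \<theta> (vars t)"
  unfolding injective_term_def linear_subst_def var_occs_subst
  by (rule distinct_concat_map_iff) (rule var_occs_not_Nil)

definition instances :: "'v trm \<times> 'v trm \<Rightarrow> 'v op" where
  "instances p = {(subst \<sigma> (fst p), subst \<sigma> (snd p)) | \<sigma>. True}"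

lemma instancesI: "(subst \<sigma> l, subst \<sigma> r) \<in> instances (l, r)"
  by (auto simp: instances_def)

lemma instancesE:
  assumes "p \<in> instances (l, r)"
  obtains \<sigma> where "p = (subst \<sigma> l, subst \<sigma> r)"
  using assms by (auto simp: instances_def)

lemma seed_iff_instances: "seed f p \<longleftrightarrow> f = instances p"
  by (simp add: seed_def instances_def)

lemma in_instances: "p \<in> instances p"
  using instancesI[of Var "fst p" "snd p"] by simp

lemma instances_Var: "instances (Var x, Var x) = Id"
  by (auto simp: instances_def intro: exI[of _ "\<lambda>_. _"])

lemma converse_instances: "converse (instances (l, r)) = instances (r, l)"
  by (auto simp: instances_def)

lemma instances_subst_subset: "instances (subst \<theta> l, subst \<theta> r) \<subseteq> instances (l, r)"
  by (auto simp: instances_def subst_subst)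

lemma instances_subst_eq:
  assumes "\<forall>x\<in>vars l \<union> vars r. subst \<tau> (\<theta> x) = Var x"
  shows "instances (subst \<theta> l, subst \<theta> r) = instances (l, r)"
proof
  show "instances (l, r) \<subseteq> instances (subst \<theta> l, subst \<theta> r)"
  proof
    fix p assume "p \<in> instances (l, r)"
    then obtain \<sigma> where p: "p = (subst \<sigma> l, subst \<sigma> r)"
      by (rule instancesE)
    define \<sigma>' where "\<sigma>' = (\<lambda>y. subst \<sigma> (\<tau> y))"
    have "subst \<sigma>' (\<theta> x) = \<sigma> x" if "x \<in> vars l \<union> vars r" for x
      using assms that subst_subst[of \<sigma> \<tau> "\<theta> x"] by (simp add: \<sigma>'_def)
    then have "subst \<sigma>' (subst \<theta> t) = subst \<sigma> t" if "vars t \<subseteq> vars l \<union> vars r" for t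
      unfolding subst_subst using that by (intro subst_cong) auto
    then have "p = (subst \<sigma>' (subst \<theta> l), subst \<sigma>' (subst \<theta> r))"
      using p by simp
    then show "p \<in> instances (subst \<theta> l, subst \<theta> r)"
      by (simp add: instancesI)
  qed
qed (rule instances_subst_subset)

definition Op_at :: "bool \<Rightarrow> 'v trm \<Rightarrow> 'v trm \<Rightarrow> 'v trm" where
  "Op_at d s t = (if d then Op s t else Op t s)"

definition ctx_op :: "bool \<Rightarrow> 'v op \<Rightarrow> 'v op" where
  "ctx_op d f = {(Op_at d s t, Op_at d s t') | s t t'. (t, t') \<in> f}"

lemma subst_Op_at: "subst \<sigma> (Op_at d s t) = Op_at d (subst \<sigma> s) (subst \<sigma> t)"
  by (simp add: Op_at_def)

lemma subterm_Op_at: "subterm (Op_at d s t) (d # \<alpha>) = subterm t \<alpha>"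
  by (simp add: Op_at_def)

lemma replace_Op_at: "replace (Op_at d s t) (d # \<alpha>) u = map_option (Op_at d s) (replace t \<alpha> u)"
  by (cases "replace t \<alpha> u") (simp_all add: Op_at_def)

lemma subterm_Cons_Some_Op_at:
  assumes "subterm t (d # \<alpha>) = Some u"
  obtains s t0 where "t = Op_at d s t0"
  using assms by (cases t) (auto simp: Op_at_def split: if_splits)

lemma O_plus_Cons: "O_plus L (d # \<alpha>) = ctx_op d (O_plus L \<alpha>)"
proof
  show "O_plus L (d # \<alpha>) \<subseteq> ctx_op d (O_plus L \<alpha>)"
  proof
    fix p assume "p \<in> O_plus L (d # \<alpha>)"
    then obtain t t' \<sigma> where p: "p = (t, t')" and sub: "subterm t (d # \<alpha>) = Some (subst \<sigma> (fst L))"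
      and rep: "replace t (d # \<alpha>) (subst \<sigma> (snd L)) = Some t'"
      by (auto simp: O_plus_def)
    from sub obtain s t0 where "t = Op_at d s t0" by (rule subterm_Cons_Some_Op_at)
    with p sub rep show "p \<in> ctx_op d (O_plus L \<alpha>)"
      by (auto simp: O_plus_def ctx_op_def subterm_Op_at replace_Op_at)
  qed
  show "ctx_op d (O_plus L \<alpha>) \<subseteq> O_plus L (d # \<alpha>)"
    by (auto simp: O_plus_def ctx_op_def subterm_Op_at replace_Op_at)
qed

lemma ctx_op_instances:
  assumes "z \<notin> vars l \<union> vars r"
  shows "ctx_op d (instances (l, r)) = instances (Op_at d (Var z) l, Op_at d (Var z) r)"
proof (intro set_eqI iffI)
  fix p assume "p \<in> ctx_op d (instances (l, r))"
  then obtain s \<sigma> where p: "p = (Op_at d s (subst \<sigma> l), Op_at d s (subst \<sigma> r))"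
    by (auto simp: ctx_op_def instances_def)
  have "subst (\<sigma>(z := s)) t = subst \<sigma> t" if "vars t \<subseteq> vars l \<union> vars r" for t
    using that assms by (intro subst_cong) auto
  then have "p = (subst (\<sigma>(z := s)) (Op_at d (Var z) l), subst (\<sigma>(z := s)) (Op_at d (Var z) r))"
    using p by (simp add: subst_Op_at)
  then show "p \<in> instances (Op_at d (Var z) l, Op_at d (Var z) r)"
    by (simp add: instancesI)
next
  fix p assume "p \<in> instances (Op_at d (Var z) l, Op_at d (Var z) r)"
  then obtain \<sigma> where "p = (Op_at d (\<sigma> z) (subst \<sigma> l), Op_at d (\<sigma> z) (subst \<sigma> r))"
    by (auto simp: subst_Op_at elim: instancesE)
  then show "p \<in> ctx_op d (instances (l, r))"
    unfolding ctx_op_def using instancesI by blast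
qed

lemma linear_law_Op_at:
  assumes "linear_law (l, r)" and "z \<notin> vars l"
  shows "linear_law (Op_at d (Var z) l, Op_at d (Var z) r)"
  using assms by (cases d) (auto simp: linear_law_def injective_term_def Op_at_def)

lemma linear_law_swap: "linear_law (l, r) \<Longrightarrow> linear_law (r, l)"
  by (auto simp: linear_law_def)

lemma O_plus_linear_seed:
  assumes "infinite (UNIV :: 'v set)" and "linear_law (L :: 'v trm \<times> 'v trm)"
  shows "\<exists>p. linear_law p \<and> O_plus L \<alpha> = instances p"
proof (induction \<alpha>)
  case Nil
  have "O_plus L [] = instances L"
    by (auto simp: O_plus_def instances_def)
  then show ?case using assms(2) by blast
next
  case (Cons d \<alpha>)
  then obtain l r where lin: "linear_law (l, r)" and eq: "O_plus L \<alpha> = instances (l, r)"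
    by auto
  obtain z where z: "z \<notin> vars l"
    using ex_new_if_finite[OF assms(1) List.finite_set] by blast
  with lin have "z \<notin> vars l \<union> vars r"
    by (simp add: linear_law_def)
  then have "O_plus L (d # \<alpha>) = instances (Op_at d (Var z) l, Op_at d (Var z) r)"
    unfolding O_plus_Cons eq by (rule ctx_op_instances)
  then show ?case
    using linear_law_Op_at[OF lin z] by blast
qed

lemma generator_linear_seed:
  assumes "infinite (UNIV :: 'v set)" and "\<forall>L\<in>Ls. linear_law L"
    and "g \<in> generators (Ls :: ('v trm \<times> 'v trm) set)"
  shows "\<exists>p. linear_law p \<and> g = instances p"
proof -
  obtain L \<alpha> where "L \<in> Ls" and g: "g = O_plus L \<alpha> \<or> g = O_minus L \<alpha>"
    using assms(3) by (auto simp: generators_def)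
  then obtain l r where lin: "linear_law (l, r)" and eq: "O_plus L \<alpha> = instances (l, r)"
    using O_plus_linear_seed[OF assms(1)] assms(2) by fastforce
  have "O_minus L \<alpha> = instances (r, l)"
    by (simp add: O_minus_def eq converse_instances)
  then show ?thesis
    using g lin linear_law_swap eq by blast
qed

lemma ex_fresh_renaming:
  assumes "infinite (UNIV :: 'v set)" and "finite (A :: 'v set)" and "finite (B :: 'v set)"
  shows "\<exists>\<pi>. inj_on \<pi> A \<and> \<pi> ` A \<inter> B = {}"
proof -
  have "infinite (UNIV - B)"
    using assms(1,3) by (simp add: Diff_infinite_finite)
  then obtain C where C: "C \<subseteq> UNIV - B" "finite C" "card C = card A"
    using infinite_arbitrarily_large by blast
  then obtain \<pi> where "bij_betw \<pi> A C"
    using finite_same_card_bij[OF assms(2) C(2)] by metis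
  then show ?thesis
    using C(1) by (auto simp: bij_betw_def)
qed

lemma linear_seed_rename_apart:
  assumes "infinite (UNIV :: 'v set)" and lin: "linear_law (l, r)" and "finite (B :: 'v set)"
  shows "\<exists>l' r'. linear_law (l', r') \<and> instances (l', r') = instances (l, r) \<and> vars l' \<inter> B = {}"
proof -
  obtain \<pi> where \<pi>: "inj_on \<pi> (vars l)" "\<pi> ` vars l \<inter> B = {}"
    using ex_fresh_renaming[OF assms(1) _ assms(3)] by blast
  define \<theta> where "\<theta> x = Var (\<pi> x)" for x :: 'v
  have vars_lr: "vars l = vars r" and inj: "injective_term l" "injective_term r"
    using lin by (auto simp: linear_law_def)
  have "\<forall>x\<in>vars l \<union> vars r. subst (\<lambda>y. Var (inv_into (vars l) \<pi> y)) (\<theta> x) = Var x"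
    using \<pi>(1) vars_lr by (simp add: \<theta>_def)
  then have "instances (subst \<theta> l, subst \<theta> r) = instances (l, r)"
    by (rule instances_subst_eq)
  moreover have "linear_subst \<theta> (vars l)"
    using \<pi>(1) by (auto simp: linear_subst_def \<theta>_def injective_term_def inj_on_def pairwise_def)
  then have "linear_law (subst \<theta> l, subst \<theta> r)"
    using inj vars_lr by (simp add: linear_law_def injective_term_subst_iff vars_subst)
  moreover have "vars (subst \<theta> l) \<inter> B = {}"
    using \<pi>(2) by (auto simp: vars_subst \<theta>_def)
  ultimately show ?thesis by blast
qed

text \<open>Generality is only demanded on the variables of \<open>s\<close> and \<open>t\<close>: the values of \<open>\<theta>\<close>
  elsewhere never matter for instantiating \<open>s\<close> or \<open>t\<close>.\<close>

definition is_mgu :: "('v \<Rightarrow> 'v trm) \<Rightarrow> 'v trm \<Rightarrow> 'v trm \<Rightarrow> bool" where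
  "is_mgu \<theta> s t \<longleftrightarrow> subst \<theta> s = subst \<theta> t
     \<and> (\<forall>\<sigma>. subst \<sigma> s = subst \<sigma> t \<longrightarrow> (\<exists>\<rho>. \<forall>x\<in>vars s \<union> vars t. subst \<rho> (\<theta> x) = \<sigma> x))"

lemma is_mgu_sym: "is_mgu \<theta> s t \<longleftrightarrow> is_mgu \<theta> t s"
  unfolding is_mgu_def by (metis sup_commute)

lemma vars_mgu_subset:
  assumes "is_mgu \<theta> s t" and "x \<in> vars s \<union> vars t"
  shows "vars (\<theta> x) \<subseteq> vars (subst \<theta> s)"
  using assms unfolding is_mgu_def by (metis UnE UN_upper vars_subst)

lemma is_mgu_Var:
  assumes "x \<notin> vars t"
  shows "is_mgu (Var(x := t)) (Var x) t"
proof -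
  have "subst (Var(x := t)) t = subst Var t"
    using assms by (intro subst_cong) auto
  then show ?thesis
    unfolding is_mgu_def
  proof (intro conjI allI impI)
    fix \<sigma> assume "subst \<sigma> (Var x) = subst \<sigma> t"
    then show "\<exists>\<rho>. \<forall>y\<in>vars (Var x) \<union> vars t. subst \<rho> ((Var(x := t)) y) = \<sigma> y"
      by (intro exI[of _ \<sigma>]) auto
  qed simp
qed

lemma is_mgu_Op:
  assumes mgu1: "is_mgu \<theta>1 s1 t1" and mgu2: "is_mgu \<theta>2 s2 t2"
    and disj: "(vars s1 \<union> vars t1) \<inter> (vars s2 \<union> vars t2) = {}"
    and disj_u: "vars (subst \<theta>1 s1) \<inter> vars (subst \<theta>2 s2) = {}"
  defines "\<theta> \<equiv> \<lambda>x. if x \<in> vars s1 \<union> vars t1 then \<theta>1 x else \<theta>2 x"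
  shows "is_mgu \<theta> (Op s1 s2) (Op t1 t2)"
    and "subst \<theta> (Op s1 s2) = Op (subst \<theta>1 s1) (subst \<theta>2 s2)"
proof -
  have \<theta>1: "subst \<theta> u = subst \<theta>1 u" if "vars u \<subseteq> vars s1 \<union> vars t1" for u
    using that by (intro subst_cong) (auto simp: \<theta>_def)
  have \<theta>2: "subst \<theta> u = subst \<theta>2 u" if "vars u \<subseteq> vars s2 \<union> vars t2" for u
    using that disj by (intro subst_cong) (auto simp: \<theta>_def)
  have "subst \<theta> (Op s1 s2) = subst \<theta> (Op t1 t2)"
    using mgu1 mgu2 by (simp add: \<theta>1 \<theta>2 is_mgu_def)
  moreover have "\<exists>\<rho>. \<forall>x\<in>vars (Op s1 s2) \<union> vars (Op t1 t2). subst \<rho> (\<theta> x) = \<sigma> x"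
    if unif: "subst \<sigma> (Op s1 s2) = subst \<sigma> (Op t1 t2)" for \<sigma>
  proof -
    obtain \<rho>1 \<rho>2 where \<rho>1: "\<forall>x\<in>vars s1 \<union> vars t1. subst \<rho>1 (\<theta>1 x) = \<sigma> x"
      and \<rho>2: "\<forall>x\<in>vars s2 \<union> vars t2. subst \<rho>2 (\<theta>2 x) = \<sigma> x"
      using unif mgu1 mgu2 unfolding is_mgu_def by (simp del: Un_iff) blast
    define \<rho> where "\<rho> = (\<lambda>z. if z \<in> vars (subst \<theta>1 s1) then \<rho>1 z else \<rho>2 z)"
    have \<rho>1_on: "subst \<rho> u = subst \<rho>1 u" if "vars u \<subseteq> vars (subst \<theta>1 s1)" for u
      using that by (intro subst_cong) (auto simp: \<rho>_def)
    have \<rho>2_on: "subst \<rho> u = subst \<rho>2 u" if "vars u \<subseteq> vars (subst \<theta>2 s2)" for u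
      using that disj_u by (intro subst_cong) (auto simp: \<rho>_def)
    have "subst \<rho> (\<theta> x) = \<sigma> x" if "x \<in> vars s1 \<union> vars t1" for x
      using \<rho>1 that \<rho>1_on[OF vars_mgu_subset[OF mgu1 that]] by (simp add: \<theta>_def)
    moreover have "subst \<rho> (\<theta> x) = \<sigma> x" if "x \<in> vars s2 \<union> vars t2" for x
      using \<rho>2 that disj \<rho>2_on[OF vars_mgu_subset[OF mgu2 that]] by (auto simp: \<theta>_def)
    ultimately show ?thesis by auto
  qed
  ultimately show "is_mgu \<theta> (Op s1 s2) (Op t1 t2)"
    unfolding is_mgu_def by blast
  show "subst \<theta> (Op s1 s2) = Op (subst \<theta>1 s1) (subst \<theta>2 s2)"
    by (simp add: \<theta>1 \<theta>2)
qed

lemma ex_injective_mgu_Var: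
  assumes "injective_term t" and "x \<notin> vars t"
  shows "\<exists>\<theta>. is_mgu \<theta> (Var x) t \<and> injective_term (subst \<theta> (Var x))
           \<and> vars (subst \<theta> (Var x)) \<subseteq> vars (Var x) \<union> vars t"
proof -
  have "is_mgu (Var(x := t)) (Var x) t" and "subst (Var(x := t)) (Var x) = t"
    using assms(2) by (simp_all add: is_mgu_Var)
  then show ?thesis
    using assms(1) by (metis Un_upper2)
qed

lemma ex_injective_mgu:
  assumes "injective_term s" and "injective_term t" and "vars s \<inter> vars t = {}"
  shows "\<exists>\<theta>. is_mgu \<theta> s t \<and> injective_term (subst \<theta> s) \<and> vars (subst \<theta> s) \<subseteq> vars s \<union> vars t"
  using assms
proof (induction s arbitrary: t)
  case (Var x)
  then show ?case
    by (intro ex_injective_mgu_Var) auto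
next
  case (Op s1 s2)
  show ?case
  proof (cases t)
    case (Var y)
    with Op.prems obtain \<theta> where mgu: "is_mgu \<theta> t (Op s1 s2)"
      and \<theta>: "injective_term (subst \<theta> t)" "vars (subst \<theta> t) \<subseteq> vars t \<union> vars (Op s1 s2)"
      using ex_injective_mgu_Var[of "Op s1 s2" y] by auto
    from mgu have "is_mgu \<theta> (Op s1 s2) t" and "subst \<theta> (Op s1 s2) = subst \<theta> t"
      by (simp_all add: is_mgu_sym is_mgu_def)
    with \<theta> show ?thesis
      by (intro exI[of _ \<theta>]) auto
  next
    case (Op t1 t2)
    have inj: "injective_term s1" "injective_term s2" "injective_term t1" "injective_term t2"
      and disj_s: "vars s1 \<inter> vars t1 = {}" "vars s2 \<inter> vars t2 = {}"
      and disj: "(vars s1 \<union> vars t1) \<inter> (vars s2 \<union> vars t2) = {}"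
      using Op.prems unfolding Op by (auto simp: injective_term_def)
    obtain \<theta>1 where
      mgu1: "is_mgu \<theta>1 s1 t1" "injective_term (subst \<theta>1 s1)" "vars (subst \<theta>1 s1) \<subseteq> vars s1 \<union> vars t1"
      using Op.IH(1)[OF inj(1,3) disj_s(1)] by blast
    obtain \<theta>2 where
      mgu2: "is_mgu \<theta>2 s2 t2" "injective_term (subst \<theta>2 s2)" "vars (subst \<theta>2 s2) \<subseteq> vars s2 \<union> vars t2"
      using Op.IH(2)[OF inj(2,4) disj_s(2)] by blast
    define \<theta> where "\<theta> = (\<lambda>x. if x \<in> vars s1 \<union> vars t1 then \<theta>1 x else \<theta>2 x)"
    have disj_u: "vars (subst \<theta>1 s1) \<inter> vars (subst \<theta>2 s2) = {}"
      using mgu1(3) mgu2(3) disj by blast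
    have mgu: "is_mgu \<theta> (Op s1 s2) t"
      and u: "subst \<theta> (Op s1 s2) = Op (subst \<theta>1 s1) (subst \<theta>2 s2)"
      unfolding Op \<theta>_def by (fact is_mgu_Op[OF mgu1(1) mgu2(1) disj disj_u])+
    have "injective_term (subst \<theta> (Op s1 s2))"
      unfolding u using mgu1(2) mgu2(2) disj_u by (simp add: injective_term_def)
    moreover have "vars (subst \<theta> (Op s1 s2)) \<subseteq> vars (Op s1 s2) \<union> vars t"
      unfolding u Op using mgu1(3) mgu2(3) by auto
    ultimately show ?thesis
      using mgu by blast
  qed
qed

lemma relcomp_instances_mgu:
  assumes mgu: "is_mgu \<theta> r1 l2"
    and vars_eq: "vars l1 = vars r1" "vars l2 = vars r2"
    and disj: "vars r1 \<inter> vars l2 = {}"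
  shows "instances (l1, r1) O instances (l2, r2) = instances (subst \<theta> l1, subst \<theta> r2)"
proof
  show "instances (l1, r1) O instances (l2, r2) \<subseteq> instances (subst \<theta> l1, subst \<theta> r2)"
  proof
    fix p assume "p \<in> instances (l1, r1) O instances (l2, r2)"
    then obtain \<sigma> \<tau> where p: "p = (subst \<sigma> l1, subst \<tau> r2)" and eq: "subst \<sigma> r1 = subst \<tau> l2"
      by (auto simp: instances_def)
    define \<mu> where "\<mu> = (\<lambda>x. if x \<in> vars r1 then \<sigma> x else \<tau> x)"
    have \<mu>\<sigma>: "subst \<mu> u = subst \<sigma> u" if "vars u \<subseteq> vars r1" for u
      using that by (intro subst_cong) (auto simp: \<mu>_def)
    have \<mu>\<tau>: "subst \<mu> u = subst \<tau> u" if "vars u \<subseteq> vars l2" for u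
      using that disj by (intro subst_cong) (auto simp: \<mu>_def)
    have "subst \<mu> r1 = subst \<mu> l2"
      using eq \<mu>\<sigma>[of r1] \<mu>\<tau>[of l2] by simp
    then obtain \<rho> where \<rho>: "\<forall>x\<in>vars r1 \<union> vars l2. subst \<rho> (\<theta> x) = \<mu> x"
      using mgu unfolding is_mgu_def by blast
    have "subst \<rho> (subst \<theta> u) = subst \<mu> u" if "vars u \<subseteq> vars r1 \<union> vars l2" for u
      unfolding subst_subst using that \<rho> by (intro subst_cong) auto
    then have "p = (subst \<rho> (subst \<theta> l1), subst \<rho> (subst \<theta> r2))"
      using p vars_eq \<mu>\<sigma>[of l1] \<mu>\<tau>[of r2] by auto
    then show "p \<in> instances (subst \<theta> l1, subst \<theta> r2)"
      by (simp add: instancesI)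
  qed
  show "instances (subst \<theta> l1, subst \<theta> r2) \<subseteq> instances (l1, r1) O instances (l2, r2)"
  proof
    fix p assume "p \<in> instances (subst \<theta> l1, subst \<theta> r2)"
    then obtain \<rho> where p: "p = (subst \<rho> (subst \<theta> l1), subst \<rho> (subst \<theta> r2))"
      by (rule instancesE)
    have "(subst \<rho> (subst \<theta> l1), subst \<rho> (subst \<theta> r1)) \<in> instances (l1, r1)"
      and "(subst \<rho> (subst \<theta> l2), subst \<rho> (subst \<theta> r2)) \<in> instances (l2, r2)"
      unfolding subst_subst by (rule instancesI)+
    moreover have "subst \<theta> r1 = subst \<theta> l2"
      using mgu by (simp add: is_mgu_def)
    ultimately show "p \<in> instances (l1, r1) O instances (l2, r2)"
      unfolding p by auto
  qed
qed

lemma relcomp_linear_instances: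
  assumes lin1: "linear_law (l1, r1)" and lin2: "linear_law (l2, r2)"
    and disj: "vars r1 \<inter> vars l2 = {}"
  shows "\<exists>p. linear_law p \<and> instances (l1, r1) O instances (l2, r2) = instances p"
proof -
  have inj: "injective_term l1" "injective_term r1" "injective_term l2" "injective_term r2"
    and vars_eq: "vars l1 = vars r1" "vars l2 = vars r2"
    using lin1 lin2 by (auto simp: linear_law_def)
  obtain \<theta> where mgu: "is_mgu \<theta> r1 l2" and inj_u: "injective_term (subst \<theta> r1)"
    using ex_injective_mgu[OF inj(2,3) disj] by blast
  have unif: "subst \<theta> r1 = subst \<theta> l2"
    using mgu by (simp add: is_mgu_def)
  have "linear_subst \<theta> (vars l1)" "linear_subst \<theta> (vars r2)"
    using inj_u unif vars_eq injective_term_subst_iff[of \<theta>] by metis+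
  moreover have "vars (subst \<theta> l1) = vars (subst \<theta> r2)"
    using unif vars_eq by (metis vars_subst)
  ultimately have "linear_law (subst \<theta> l1, subst \<theta> r2)"
    using inj by (simp add: linear_law_def injective_term_subst_iff)
  then show ?thesis
    using relcomp_instances_mgu[OF mgu vars_eq disj] by blast
qed

lemma G_mon_linear_seed:
  assumes "infinite (UNIV :: 'v set)" and "\<forall>L\<in>Ls. linear_law L"
  shows "f \<in> G_mon (Ls :: ('v trm \<times> 'v trm) set) \<Longrightarrow> \<exists>p. linear_law p \<and> f = instances p"
proof (induction rule: G_mon.induct)
  case G_id
  have "linear_law (Var x :: 'v trm, Var x)" for x
    by (simp add: linear_law_def injective_term_def)
  then show ?case
    using instances_Var by metis
next
  case (G_step f g)
  then obtain l1 r1 where f: "linear_law (l1, r1)" "f = instances (l1, r1)"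
    by auto
  obtain l r where "linear_law (l, r)" "g = instances (l, r)"
    using generator_linear_seed[OF assms G_step.hyps(2)] by auto
  then obtain l2 r2 where g: "linear_law (l2, r2)" "g = instances (l2, r2)" "vars l2 \<inter> vars r1 = {}"
    using linear_seed_rename_apart[OF assms(1)] by (metis List.finite_set)
  show ?case
    using relcomp_linear_instances[OF f(1) g(1)] f(2) g(2,3) by blast
qed

lemma instances_eq_injective:
  assumes "instances (l0, r0) = instances (l, r)"
    and "injective_term l0" and "injective_term r0"
  shows "injective_term l \<and> injective_term r"
proof -
  have "(l0, r0) \<in> instances (l, r)"
    using assms(1) in_instances by metis
  then obtain \<sigma> where "l0 = subst \<sigma> l" "r0 = subst \<sigma> r"
    by (auto elim: instancesE)
  then show ?thesis
    using assms(2,3) injective_term_subst_iff by metis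
qed

theorem lemma2p5:
  fixes Ls :: "('v trm \<times> 'v trm) set"
  assumes "infinite (UNIV :: 'v set)"
    and "\<forall>L\<in>Ls. linear_law L"
  shows "\<forall>f\<in>G_mon Ls. f \<noteq> {} \<and> (\<exists>p. seed f p)
           \<and> (\<forall>l r. seed f (l, r) \<longrightarrow> injective_term l \<and> injective_term r)"
proof
  fix f assume "f \<in> G_mon Ls"
  then obtain l0 r0 where lin: "linear_law (l0, r0)" and f: "f = instances (l0, r0)"
    using G_mon_linear_seed[OF assms] by (metis surj_pair)
  have "injective_term l \<and> injective_term r" if "seed f (l, r)" for l r
    using that lin f instances_eq_injective[of l0 r0 l r]
    by (simp add: seed_iff_instances linear_law_def)
  moreover have "f \<noteq> {}"
    using f in_instances by blast
  ultimately show "f \<noteq> {} \<and> (\<exists>p. seed f p)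
           \<and> (\<forall>l r. seed f (l, r) \<longrightarrow> injective_term l \<and> injective_term r)"
    using f seed_iff_instances by blast
qed

end
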